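(* There is an absolute constant $c_0>0$ such that the following holds. Let $\alpha\in(0,\tfrac12)$, $\beta\in(0,1)$, and let $G$ be a graph on $n$ vertices with at least $\alpha n^2$ edges. Then either $G$ contains at least $c_0\alpha^{80}\beta^{20}n^4$ induced copies of $C_4$, or there is a set $X\subseteq V(G)$ with $|X|\ge0.1\alpha^2n$ and $d(X)\ge1-\beta$.
   Context: For a nonempty $X\subseteq V(G)$ (with $|X|\ge 2$), $d(X)=e(X)/\binom{|X|}{2}$, where $e(X)$ is the number of edges of $G$ with both endpoints in $X$. An induced copy of $C_4$ is a set of $4$ vertices inducing a $4$-cycle. *)

theory Defs
  imports Main Complex_Main
begin

definition simple_graph :: "'a set \<Rightarrow> ('a \<Rightarrow> 'a \<Rightarrow> bool) \<Rightarrow> bool" where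
  "simple_graph V E \<longleftrightarrow> finite V \<and> (\<forall>u v. E u v \<longrightarrow> E v u) \<and> (\<forall>u. \<not> E u u)"

definition edges_in :: "('a \<Rightarrow> 'a \<Rightarrow> bool) \<Rightarrow> 'a set \<Rightarrow> 'a set set" where
  "edges_in E X = {{u, v} | u v. u \<in> X \<and> v \<in> X \<and> E u v}"

definition e_count :: "('a \<Rightarrow> 'a \<Rightarrow> bool) \<Rightarrow> 'a set \<Rightarrow> nat" where
  "e_count E X = card (edges_in E X)"

definition density :: "('a \<Rightarrow> 'a \<Rightarrow> bool) \<Rightarrow> 'a set \<Rightarrow> real" where
  "density E X = real (e_count E X) / real (card X choose 2)"

definition induced_C4 :: "'a set \<Rightarrow> ('a \<Rightarrow> 'a \<Rightarrow> bool) \<Rightarrow> 'a set \<Rightarrow> bool" where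
  "induced_C4 V E S \<longleftrightarrow> S \<subseteq> V \<and> (\<exists>a b c d. S = {a, b, c, d} \<and> distinct [a, b, c, d] \<and>
     E a b \<and> E b c \<and> E c d \<and> E d a \<and> \<not> E a c \<and> \<not> E b d)"

definition num_induced_C4 :: "'a set \<Rightarrow> ('a \<Rightarrow> 'a \<Rightarrow> bool) \<Rightarrow> nat" where
  "num_induced_C4 V E = card {S. induced_C4 V E S}"

end

theory Submission
  imports Defs
begin

text \<open>Suppose no set of at least \<open>T = \<alpha>\<^sup>2n/10\<close> vertices has density \<open>1 - \<beta>\<close>, so every such
  set \<open>S\<close> spans at least \<open>\<beta>|S|(|S| - 1)\<close> ordered non-adjacent pairs. Call a non-adjacent pair
  rich if it has at least \<open>T\<close> common neighbours. The common neighbourhood of a rich pair \<open>(u, w)\<close>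
  contains at least \<open>\<beta>T codeg(u, w)/2\<close> non-adjacent pairs \<open>(x, y)\<close>, and \<open>u x w y\<close> is an induced
  \<open>C\<^sub>4\<close>; so it suffices to show that the codegrees of rich pairs sum to about \<open>\<beta>\<alpha>\<^sup>2n\<^sup>3\<close>.
  For this, bound \<open>(deg x - 1)\<^sup>2\<close> for each vertex \<open>x\<close> by the rich and the non-adjacent pairs inside
  its neighbourhood, sum over \<open>x\<close> (each pair \<open>p\<close> is counted \<open>codeg p\<close> times), and compare with
  \<open>\<Sum>\<^sub>x (deg x - 1)\<^sup>2 \<ge> 4\<alpha>\<^sup>2n\<^sup>3 - 4\<alpha>n\<^sup>2\<close>, which holds by convexity since the graph has
  at least \<open>\<alpha>n\<^sup>2\<close> edges.\<close>

definition neighbours :: "('a \<Rightarrow> 'a \<Rightarrow> bool) \<Rightarrow> 'a set \<Rightarrow> 'a \<Rightarrow> 'a set" where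
  "neighbours E V x = {y \<in> V. E x y}"

definition non_neighbours :: "('a \<Rightarrow> 'a \<Rightarrow> bool) \<Rightarrow> 'a set \<Rightarrow> 'a \<Rightarrow> 'a set" where
  "non_neighbours E S u = {w \<in> S. w \<noteq> u \<and> \<not> E u w}"

definition codegree :: "('a \<Rightarrow> 'a \<Rightarrow> bool) \<Rightarrow> 'a set \<Rightarrow> 'a \<times> 'a \<Rightarrow> nat" where
  "codegree E V p = card (neighbours E V (fst p) \<inter> neighbours E V (snd p))"

definition adj_pairs :: "('a \<Rightarrow> 'a \<Rightarrow> bool) \<Rightarrow> 'a set \<Rightarrow> ('a \<times> 'a) set" where
  "adj_pairs E S = {(u, w). u \<in> S \<and> w \<in> S \<and> E u w}"

definition nonadj_pairs :: "('a \<Rightarrow> 'a \<Rightarrow> bool) \<Rightarrow> 'a set \<Rightarrow> ('a \<times> 'a) set" where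
  "nonadj_pairs E S = {(u, w). u \<in> S \<and> w \<in> S \<and> u \<noteq> w \<and> \<not> E u w}"

lemma simple_graph_subset: "simple_graph V E \<Longrightarrow> S \<subseteq> V \<Longrightarrow> simple_graph S E"
  unfolding simple_graph_def using finite_subset by blast

lemma finite_adj_pairs: "finite S \<Longrightarrow> finite (adj_pairs E S)"
  by (rule finite_subset[of _ "S \<times> S"]) (auto simp: adj_pairs_def)

lemma nonadj_pairs_subset_Times: "nonadj_pairs E S \<subseteq> S \<times> S"
  unfolding nonadj_pairs_def by auto

lemma finite_nonadj_pairs: "finite S \<Longrightarrow> finite (nonadj_pairs E S)"
  by (rule finite_subset[OF nonadj_pairs_subset_Times]) simp

lemma nonadj_pairs_neighbours:
  "nonadj_pairs E (neighbours E V x) = nonadj_pairs E V \<inter> neighbours E V x \<times> neighbours E V x"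
  unfolding nonadj_pairs_def neighbours_def by auto

lemma card_adj_pairs:
  assumes "simple_graph S E"
  shows "card (adj_pairs E S) = 2 * e_count E S"
proof -
  have fin: "finite S" and sym: "\<And>u v. E u v \<Longrightarrow> E v u" and irr: "\<And>u. \<not> E u u"
    using assms unfolding simple_graph_def by auto
  let ?edge = "\<lambda>p::'a \<times> 'a. {fst p, snd p}"
  have img: "?edge ` adj_pairs E S \<subseteq> edges_in E S"
    unfolding adj_pairs_def edges_in_def by fastforce
  have "finite (edges_in E S)"
    by (rule finite_subset[of _ "Pow S"]) (use fin in \<open>auto simp: edges_in_def\<close>)
  then have "card (adj_pairs E S) = (\<Sum>e\<in>edges_in E S. card {p \<in> adj_pairs E S. ?edge p = e})"
    using sum_fun_comp[OF finite_adj_pairs[OF fin] _ img, of "\<lambda>_. 1::nat"] by simp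
  also have "\<dots> = (\<Sum>e\<in>edges_in E S. 2)"
  proof (rule sum.cong)
    fix e assume "e \<in> edges_in E S"
    then obtain a b where e: "e = {a, b}" "a \<in> S" "b \<in> S" "E a b"
      unfolding edges_in_def by auto
    then have "{p \<in> adj_pairs E S. ?edge p = e} = {(a, b), (b, a)}" "a \<noteq> b"
      using sym irr unfolding adj_pairs_def by (auto simp: doubleton_eq_iff)
    then show "card {p \<in> adj_pairs E S. ?edge p = e} = 2" by simp
  qed simp
  finally show ?thesis unfolding e_count_def by simp
qed

lemma card_nonadj_pairs_add_adj_pairs:
  assumes "simple_graph S E"
  shows "card (nonadj_pairs E S) + card (adj_pairs E S) = card S * (card S - 1)"
proof -
  have fin: "finite S" and irr: "\<And>u. \<not> E u u"
    using assms unfolding simple_graph_def by auto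
  have "nonadj_pairs E S \<union> adj_pairs E S = S \<times> S - (\<lambda>x. (x, x)) ` S"
    using irr unfolding nonadj_pairs_def adj_pairs_def by auto
  moreover have "card (S \<times> S - (\<lambda>x. (x, x)) ` S) = card S * card S - card S"
    using fin by (subst card_Diff_subset) (auto simp: card_image inj_on_def card_cartesian_product)
  moreover have "nonadj_pairs E S \<inter> adj_pairs E S = {}"
    unfolding nonadj_pairs_def adj_pairs_def by auto
  ultimately show ?thesis
    using card_Un_disjoint[OF finite_nonadj_pairs[of S E] finite_adj_pairs[of S E]] fin
    by (simp add: diff_mult_distrib2)
qed

lemma real_choose_two: "real (n choose 2) * 2 = real n * (real n - 1)"
proof -
  have "even (n * (n - 1))"
    by auto
  then have "(n choose 2) * 2 = n * (n - 1)"
    unfolding choose_two by simp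
  then have "real (n choose 2) * 2 = real (n * (n - 1))"
    by (metis of_nat_mult of_nat_numeral)
  also have "\<dots> = real n * (real n - 1)"
    by (cases n) (auto simp: algebra_simps)
  finally show ?thesis .
qed

lemma card_nonadj_pairs_ge_if_density_le:
  assumes "simple_graph S E" and "density E S \<le> 1 - \<beta>"
  shows "\<beta> * real (card S) * (real (card S) - 1) \<le> real (card (nonadj_pairs E S))"
proof (cases "card S \<ge> 2")
  case False
  then have "card S = 0 \<or> card S = 1" by auto
  then show ?thesis by auto
next
  case True
  then have "real (e_count E S) \<le> (1 - \<beta>) * real (card S choose 2)"
    using assms(2) unfolding density_def by (simp add: divide_le_eq)
  then have "real (e_count E S) * 2 \<le> (1 - \<beta>) * (real (card S choose 2) * 2)"
    by linarith
  then have "real (card (adj_pairs E S)) \<le> (1 - \<beta>) * (real (card S) * (real (card S) - 1))"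
    using card_adj_pairs[OF assms(1)] real_choose_two[of "card S"] by simp
  moreover have "real (card (nonadj_pairs E S)) + real (card (adj_pairs E S))
      = real (card S) * (real (card S) - 1)"
    using card_nonadj_pairs_add_adj_pairs[OF assms(1)] True
    by (metis of_nat_1 of_nat_add of_nat_diff of_nat_mult one_le_numeral order_trans)
  ultimately show ?thesis by (simp add: algebra_simps)
qed

lemma nonadj_pairs_eq_Sigma: "nonadj_pairs E S = Sigma S (non_neighbours E S)"
  unfolding nonadj_pairs_def non_neighbours_def by auto

lemma sum_degree:
  assumes "simple_graph V E"
  shows "(\<Sum>x\<in>V. card (neighbours E V x)) = 2 * e_count E V"
proof -
  have "adj_pairs E V = Sigma V (neighbours E V)"
    unfolding adj_pairs_def neighbours_def by auto
  moreover have "finite V"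
    using assms unfolding simple_graph_def by simp
  ultimately show ?thesis
    using card_adj_pairs[OF assms] by (simp add: neighbours_def)
qed

lemma sum_codegree:
  assumes "simple_graph V E" and "Z \<subseteq> V \<times> V"
  shows "(\<Sum>p\<in>Z. codegree E V p) = (\<Sum>x\<in>V. card (Z \<inter> neighbours E V x \<times> neighbours E V x))"
proof -
  have fin: "finite V" and sym: "\<And>u v. E u v \<Longrightarrow> E v u"
    using assms(1) unfolding simple_graph_def by auto
  have finZ: "finite Z"
    using assms(2) fin finite_subset by blast
  let ?R = "\<lambda>p x. fst p \<in> neighbours E V x \<and> snd p \<in> neighbours E V x"
  have "codegree E V p = card {x \<in> V. ?R p x}" if "p \<in> Z" for p
  proof -
    have "neighbours E V (fst p) \<inter> neighbours E V (snd p) = {x \<in> V. ?R p x}"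
      using that assms(2) sym unfolding neighbours_def by auto
    then show ?thesis unfolding codegree_def by simp
  qed
  then have "(\<Sum>p\<in>Z. codegree E V p) = (\<Sum>p\<in>Z. \<Sum>x\<in>{x \<in> V. ?R p x}. 1)"
    by simp
  also have "\<dots> = (\<Sum>x\<in>V. \<Sum>p\<in>{p \<in> Z. ?R p x}. 1)"
    by (rule sum.swap_restrict[OF finZ fin])
  also have "\<dots> = (\<Sum>x\<in>V. card (Z \<inter> neighbours E V x \<times> neighbours E V x))"
    by (intro sum.cong) (auto intro: arg_cong[where f = card])
  finally show ?thesis .
qed

lemma card_many_non_neighbours_le:
  assumes "finite S"
  shows "real (card {u \<in> S. h \<le> real (card (non_neighbours E S u))}) * h
    \<le> real (card (nonadj_pairs E S))"
proof -
  let ?W = "{u \<in> S. h \<le> real (card (non_neighbours E S u))}"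
  have "real (card ?W) * h \<le> (\<Sum>u\<in>?W. real (card (non_neighbours E S u)))"
    by (rule sum_bounded_below) simp
  also have "\<dots> \<le> (\<Sum>u\<in>S. real (card (non_neighbours E S u)))"
    by (rule sum_mono2[OF assms]) auto
  also have "\<dots> = real (card (nonadj_pairs E S))"
    using assms unfolding nonadj_pairs_eq_Sigma by (simp add: non_neighbours_def)
  finally show ?thesis .
qed

lemma card_le_codegree_add_non_neighbours:
  assumes "finite V" and "A \<subseteq> V"
  shows "card A \<le> 2 + card (non_neighbours E A u) + card (non_neighbours E A w) + codegree E V (u, w)"
proof -
  have finA: "finite A"
    using assms finite_subset by blast
  have cover: "card A \<le> 1 + card (A \<inter> neighbours E V v) + card (non_neighbours E A v)" for v
  proof -
    have "A \<subseteq> {v} \<union> (A \<inter> neighbours E V v) \<union> non_neighbours E A v"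
      using assms(2) unfolding neighbours_def non_neighbours_def by auto
    then have "card A \<le> card ({v} \<union> (A \<inter> neighbours E V v) \<union> non_neighbours E A v)"
      by (rule card_mono[rotated]) (use finA in \<open>auto simp: non_neighbours_def\<close>)
    also have "\<dots> \<le> card {v} + card (A \<inter> neighbours E V v) + card (non_neighbours E A v)"
      by (meson add_le_mono1 card_Un_le le_trans)
    finally show ?thesis by simp
  qed
  have "card (A \<inter> neighbours E V u) + card (A \<inter> neighbours E V w)
      = card ((A \<inter> neighbours E V u) \<union> (A \<inter> neighbours E V w))
        + card (A \<inter> neighbours E V u \<inter> neighbours E V w)"
    using card_Un_Int[of "A \<inter> neighbours E V u" "A \<inter> neighbours E V w"] finA
    by (simp add: Int_ac)
  also have "\<dots> \<le> card A + codegree E V (u, w)"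
    unfolding codegree_def using finA assms(1)
    by (intro add_mono card_mono) (auto simp: neighbours_def)
  finally show ?thesis
    using cover[of u] cover[of w] by linarith
qed

lemma exists_edge_with_density_one:
  assumes "simple_graph V E" and "0 < e_count E V"
  shows "\<exists>X \<subseteq> V. card X = 2 \<and> density E X = 1"
proof -
  obtain u v where uv: "u \<in> V" "v \<in> V" "E u v"
    using assms(2) unfolding e_count_def edges_in_def by (auto simp: card_gt_0_iff)
  have irr: "\<And>u. \<not> E u u"
    using assms(1) unfolding simple_graph_def by auto
  then have "u \<noteq> v"
    using uv(3) by auto
  moreover have "edges_in E {u, v} = {{u, v}}"
    using uv(3) irr unfolding edges_in_def by auto
  ultimately show ?thesis
    using uv by (intro exI[of _ "{u, v}"]) (simp add: density_def e_count_def choose_two)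
qed

text \<open>A pair of non-adjacent vertices together with a pair of non-adjacent common neighbours
  spans an induced 4-cycle, and a 4-set is spanned by at most \<open>4\<^sup>4\<close> such quadruples.\<close>

lemma sum_nonadj_common_neighbours_le_num_induced_C4:
  assumes "simple_graph V E"
  shows "(\<Sum>p\<in>nonadj_pairs E V.
      card (nonadj_pairs E (neighbours E V (fst p) \<inter> neighbours E V (snd p))))
    \<le> 256 * num_induced_C4 V E"
proof -
  have fin: "finite V" and sym: "\<And>u v. E u v \<Longrightarrow> E v u" and irr: "\<And>u. \<not> E u u"
    using assms unfolding simple_graph_def by auto
  let ?Q = "Sigma (nonadj_pairs E V) (\<lambda>p. nonadj_pairs E (neighbours E V (fst p) \<inter> neighbours E V (snd p)))"
  let ?C = "{S. induced_C4 V E S}"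
  have finC: "finite ?C"
    by (rule finite_subset[of _ "Pow V"]) (use fin in \<open>auto simp: induced_C4_def\<close>)
  have "?Q \<subseteq> (\<Union>S\<in>?C. (S \<times> S) \<times> (S \<times> S))"
  proof
    fix t assume "t \<in> ?Q"
    then obtain u w x y where t: "t = ((u, w), (x, y))"
      and h: "u \<in> V" "w \<in> V" "u \<noteq> w" "\<not> E u w" "x \<in> V" "y \<in> V"
        "E u x" "E w x" "E u y" "E w y" "x \<noteq> y" "\<not> E x y"
      by (auto simp: nonadj_pairs_def neighbours_def)
    have "induced_C4 V E {u, x, w, y}"
      unfolding induced_C4_def
    proof (intro conjI exI)
      show "distinct [u, x, w, y]" using h irr by auto
    qed (use h sym in auto)
    then show "t \<in> (\<Union>S\<in>?C. (S \<times> S) \<times> (S \<times> S))" using t by blast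
  qed
  then have "card ?Q \<le> card (\<Union>S\<in>?C. (S \<times> S) \<times> (S \<times> S))"
    by (rule card_mono[rotated]) (use finC in \<open>auto simp: induced_C4_def intro: finite_subset[OF _ fin]\<close>)
  also have "\<dots> \<le> (\<Sum>S\<in>?C. card ((S \<times> S) \<times> (S \<times> S)))"
    by (rule card_UN_le[OF finC])
  also have "\<dots> = (\<Sum>S\<in>?C. 256)"
  proof (rule sum.cong)
    fix S assume "S \<in> ?C"
    then have "card S = 4"
      unfolding induced_C4_def by auto
    then show "card ((S \<times> S) \<times> (S \<times> S)) = 256"
      by (simp add: card_cartesian_product)
  qed simp
  finally show ?thesis
    using fin by (simp add: num_induced_C4_def finite_nonadj_pairs neighbours_def)
qed

lemma sum_square_ge_tangent:
  fixes f :: "'a \<Rightarrow> real"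
  shows "2 * c * (\<Sum>x\<in>A. f x) - real (card A) * c ^ 2 \<le> (\<Sum>x\<in>A. (f x) ^ 2)"
proof -
  have "2 * c * f x - c ^ 2 \<le> (f x) ^ 2" for x
    using zero_le_power2[of "f x - c"] by (simp add: power2_eq_square algebra_simps)
  then have "(\<Sum>x\<in>A. 2 * c * f x - c ^ 2) \<le> (\<Sum>x\<in>A. (f x) ^ 2)"
    by (rule sum_mono)
  then show ?thesis
    by (simp add: sum_subtractf sum_distrib_left)
qed

lemma sum_sq_degree_ge:
  assumes "simple_graph V E" and "0 \<le> \<alpha>"
    and dense: "\<alpha> * real (card V) ^ 2 \<le> real (e_count E V)"
  shows "4 * \<alpha> ^ 2 * real (card V) ^ 3 - 4 * \<alpha> * real (card V) ^ 2
    \<le> (\<Sum>x\<in>V. (real (card (neighbours E V x)) - 1) ^ 2)"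
proof -
  define n where "n = real (card V)"
  define deg where "deg x = real (card (neighbours E V x))" for x
  have "2 * \<alpha> * n ^ 2 \<le> (\<Sum>x\<in>V. deg x)"
    using sum_degree[OF assms(1)] dense unfolding deg_def n_def
    by (simp flip: of_nat_sum)
  then have "4 * \<alpha> * n * (2 * \<alpha> * n ^ 2 - n) \<le> 2 * (2 * \<alpha> * n) * (\<Sum>x\<in>V. deg x - 1)"
    using assms(2) unfolding n_def by (simp add: sum_subtractf mult_left_mono)
  moreover have "4 * \<alpha> * n * (2 * \<alpha> * n ^ 2 - n) - n * (2 * \<alpha> * n) ^ 2
      = 4 * \<alpha> ^ 2 * n ^ 3 - 4 * \<alpha> * n ^ 2"
    by (simp add: power2_eq_square power3_eq_cube algebra_simps)
  ultimately show ?thesis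
    using sum_square_ge_tangent[of "2 * \<alpha> * n" "\<lambda>x. deg x - 1" V]
    unfolding deg_def n_def by linarith
qed

text \<open>The arithmetic of \<open>sq_card_le_if_large\<close> below: \<open>d\<close> is the size of a vertex set, \<open>w\<close> the
  number of vertices removed from it, \<open>P\<close> and \<open>Q\<close> count its non-adjacent and its rich pairs.\<close>

lemma sq_minus_one_le_of_split:
  fixes d w T \<beta> P Q :: real
  assumes "2 \<le> T" and "4 * T \<le> d" and "0 \<le> w" and "0 < \<beta>" and "0 \<le> Q"
    and "d * w \<le> 4 * P" and "T \<le> d - w \<Longrightarrow> \<beta> * (d - w) * (d - w - 1) \<le> Q"
  shows "(d - 1) ^ 2 \<le> Q / \<beta> + 8 * P"
proof (cases "T \<le> d - w")
  case True
  then have "(d - w) * (d - w - 1) \<le> Q / \<beta>"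
    using assms(4,7) by (simp add: field_simps)
  moreover have "(d - w) * (d - w - 1) + 2 * d * w - (d - 1) ^ 2 = d + w + w * w - 1"
    by (simp add: power2_eq_square algebra_simps)
  ultimately show ?thesis
    using True assms(1,3,6) zero_le_square[of w] by linarith
next
  case False
  then have "d * (3 / 4 * d) \<le> d * w"
    using assms(1,2) by (intro mult_left_mono) auto
  moreover have "(d - 1) ^ 2 \<le> d * d"
    using assms(1,2) by (simp add: power2_eq_square algebra_simps)
  moreover have "0 \<le> Q / \<beta>"
    using assms(4,5) by simp
  ultimately show ?thesis
    using assms(6) zero_le_square[of d] by linarith
qed

locale no_dense_subsets =
  fixes V :: "'a set" and E :: "'a \<Rightarrow> 'a \<Rightarrow> bool" and T \<beta> :: real
  assumes graph: "simple_graph V E"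
    and sparse: "\<And>X. X \<subseteq> V \<Longrightarrow> T \<le> real (card X) \<Longrightarrow> density E X < 1 - \<beta>"
    and T_ge_2: "2 \<le> T"
    and beta_pos: "0 < \<beta>"
begin

lemma finite_V: "finite V"
  using graph unfolding simple_graph_def by simp

lemma many_nonadj_pairs:
  assumes "S \<subseteq> V" and "T \<le> real (card S)"
  shows "\<beta> * real (card S) * (real (card S) - 1) \<le> real (card (nonadj_pairs E S))"
  using card_nonadj_pairs_ge_if_density_le[OF simple_graph_subset[OF graph assms(1)]]
    sparse[OF assms] by simp

definition rich_pairs :: "('a \<times> 'a) set" where
  "rich_pairs = {p \<in> nonadj_pairs E V. T \<le> real (codegree E V p)}"

lemma rich_pairs_subset: "rich_pairs \<subseteq> nonadj_pairs E V"
  unfolding rich_pairs_def by auto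

lemma nonadj_pairs_rich_if_few_non_neighbours:
  assumes AV: "A \<subseteq> V" and "B \<subseteq> A"
    and few: "\<And>u. u \<in> B \<Longrightarrow> 2 * real (card (non_neighbours E A u)) < real (card A) - T - 2"
  shows "nonadj_pairs E B \<subseteq> rich_pairs \<inter> A \<times> A"
proof
  fix p assume p: "p \<in> nonadj_pairs E B"
  then obtain u w where uw: "p = (u, w)" "u \<in> B" "w \<in> B"
    unfolding nonadj_pairs_def by auto
  have "real (card A) \<le> 2 + real (card (non_neighbours E A u))
      + real (card (non_neighbours E A w)) + real (codegree E V p)"
    using of_nat_mono[where 'a = real,
        OF card_le_codegree_add_non_neighbours[OF finite_V AV, of E u w]] uw(1)
    by simp
  then have "T \<le> real (codegree E V p)"
    using few[OF uw(2)] few[OF uw(3)] by linarith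
  then show "p \<in> rich_pairs \<inter> A \<times> A"
    using p AV \<open>B \<subseteq> A\<close> unfolding rich_pairs_def nonadj_pairs_def by auto
qed

text \<open>By Markov, few vertices of \<open>A\<close> have many non-neighbours in \<open>A\<close>, and any two of the
  others have at least \<open>T\<close> common neighbours. So either the others form a set of size at least
  \<open>T\<close>, whose many non-adjacent pairs are all rich, or \<open>A\<close> itself has many non-adjacent pairs.\<close>

lemma sq_card_le_if_large:
  assumes AV: "A \<subseteq> V" and large: "4 * T \<le> real (card A)"
  shows "(real (card A) - 1) ^ 2
    \<le> real (card (rich_pairs \<inter> A \<times> A)) / \<beta> + 8 * real (card (nonadj_pairs E A))"
proof -
  define d where "d = real (card A)"
  define h where "h = (d - T - 2) / 2"
  define W where "W = {u \<in> A. h \<le> real (card (non_neighbours E A u))}"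
  have finA: "finite A"
    using AV finite_V finite_subset by blast
  have WA: "W \<subseteq> A"
    unfolding W_def by auto
  have card_rest: "real (card (A - W)) = d - real (card W)"
    unfolding d_def using card_Diff_subset[OF finite_subset[OF WA finA] WA] card_mono[OF finA WA]
    by simp
  have "d \<le> 4 * h"
    using large T_ge_2 unfolding h_def d_def by simp
  then have "d * real (card W) \<le> 4 * (real (card W) * h)"
    by (metis mult.assoc mult.commute mult_right_mono of_nat_0_le_iff)
  also have "\<dots> \<le> 4 * real (card (nonadj_pairs E A))"
    using card_many_non_neighbours_le[OF finA] unfolding W_def by simp
  finally have W_small: "d * real (card W) \<le> 4 * real (card (nonadj_pairs E A))" .
  have "nonadj_pairs E (A - W) \<subseteq> rich_pairs \<inter> A \<times> A"
    using AV by (intro nonadj_pairs_rich_if_few_non_neighbours) (auto simp: W_def h_def d_def)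
  then have "card (nonadj_pairs E (A - W)) \<le> card (rich_pairs \<inter> A \<times> A)"
    using finA by (intro card_mono) auto
  then have "T \<le> d - real (card W) \<Longrightarrow>
      \<beta> * (d - real (card W)) * (d - real (card W) - 1) \<le> real (card (rich_pairs \<inter> A \<times> A))"
    using many_nonadj_pairs[of "A - W"] AV card_rest by force
  then show ?thesis
    using sq_minus_one_le_of_split[OF T_ge_2 _ _ beta_pos _ W_small] large
    unfolding d_def by simp
qed

lemma sq_card_le:
  assumes "A \<subseteq> V"
  shows "(real (card A) - 1) ^ 2
    \<le> 16 * T ^ 2 + real (card (rich_pairs \<inter> A \<times> A)) / \<beta> + 8 * real (card (nonadj_pairs E A))"
proof (cases "4 * T \<le> real (card A)")
  case True
  then show ?thesis
    using sq_card_le_if_large[OF assms] zero_le_power2[of T] by linarith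
next
  case False
  then have "(real (card A) - 1) ^ 2 \<le> (4 * T) ^ 2"
    using T_ge_2 by (intro power2_le_iff_abs_le[THEN iffD2]) auto
  then show ?thesis
    using beta_pos by (simp add: power_mult_distrib add_increasing2)
qed

abbreviation rich_codegree_sum :: real where
  "rich_codegree_sum \<equiv> \<Sum>p\<in>rich_pairs. real (codegree E V p)"

lemma sum_codegree_nonadj_pairs_le:
  "(\<Sum>p\<in>nonadj_pairs E V. real (codegree E V p)) \<le> rich_codegree_sum + real (card V) ^ 2 * T"
proof -
  have fin: "finite (nonadj_pairs E V)"
    using finite_nonadj_pairs[OF finite_V] .
  have "(\<Sum>p\<in>nonadj_pairs E V - rich_pairs. real (codegree E V p))
      \<le> real (card (nonadj_pairs E V - rich_pairs)) * T"
    by (rule sum_bounded_above) (auto simp: rich_pairs_def)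
  also have "\<dots> \<le> real (card V) ^ 2 * T"
  proof -
    have "nonadj_pairs E V - rich_pairs \<subseteq> V \<times> V"
      using nonadj_pairs_subset_Times[of E V] by blast
    then have "card (nonadj_pairs E V - rich_pairs) \<le> card (V \<times> V)"
      using finite_V by (intro card_mono) auto
    then have "real (card (nonadj_pairs E V - rich_pairs)) \<le> real (card V) ^ 2"
      by (metis card_cartesian_product of_nat_le_iff of_nat_mult power2_eq_square)
    then show ?thesis
      using T_ge_2 by (intro mult_right_mono) auto
  qed
  finally show ?thesis
    using sum.subset_diff[OF rich_pairs_subset fin, of "\<lambda>p. real (codegree E V p)"] by simp
qed

lemma sum_sq_degree_le:
  "(\<Sum>x\<in>V. (real (card (neighbours E V x)) - 1) ^ 2)
    \<le> real (card V) * (16 * T ^ 2) + rich_codegree_sum / \<beta>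
      + 8 * rich_codegree_sum + 8 * real (card V) ^ 2 * T"
proof -
  have NV: "neighbours E V x \<subseteq> V" for x
    unfolding neighbours_def by auto
  have "rich_pairs \<subseteq> V \<times> V"
    using rich_pairs_subset nonadj_pairs_subset_Times[of E V] by blast
  then have rich: "(\<Sum>x\<in>V. real (card (rich_pairs \<inter> neighbours E V x \<times> neighbours E V x)))
      = rich_codegree_sum"
    using sum_codegree[OF graph] by (simp flip: of_nat_sum)
  have nonadj: "(\<Sum>x\<in>V. real (card (nonadj_pairs E (neighbours E V x))))
      = (\<Sum>p\<in>nonadj_pairs E V. real (codegree E V p))"
    using sum_codegree[OF graph nonadj_pairs_subset_Times]
    by (simp add: nonadj_pairs_neighbours flip: of_nat_sum)
  have "(\<Sum>x\<in>V. (real (card (neighbours E V x)) - 1) ^ 2)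
      \<le> (\<Sum>x\<in>V. 16 * T ^ 2 + real (card (rich_pairs \<inter> neighbours E V x \<times> neighbours E V x)) / \<beta>
          + 8 * real (card (nonadj_pairs E (neighbours E V x))))"
    by (intro sum_mono sq_card_le NV)
  also have "\<dots> = real (card V) * (16 * T ^ 2) + rich_codegree_sum / \<beta>
      + 8 * (\<Sum>p\<in>nonadj_pairs E V. real (codegree E V p))"
    by (simp add: sum.distrib rich nonadj flip: sum_divide_distrib sum_distrib_left)
  finally show ?thesis
    using sum_codegree_nonadj_pairs_le by linarith
qed

lemma rich_codegree_sum_le_num_induced_C4:
  "\<beta> * (T / 2) * rich_codegree_sum \<le> 256 * real (num_induced_C4 V E)"
proof -
  let ?N = "\<lambda>p. neighbours E V (fst p) \<inter> neighbours E V (snd p)"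
  have "\<beta> * (T / 2) * real (codegree E V p) \<le> real (card (nonadj_pairs E (?N p)))"
    if "p \<in> rich_pairs" for p
  proof -
    define c where "c = real (card (?N p))"
    have T_le: "T \<le> c"
      using that unfolding rich_pairs_def codegree_def c_def by simp
    then have "T / 2 * c \<le> (c - 1) * c"
      using T_ge_2 by (intro mult_right_mono) auto
    then have "\<beta> * (T / 2) * c \<le> \<beta> * c * (c - 1)"
      using beta_pos by (simp add: mult_left_mono mult.commute mult.left_commute)
    also have "\<dots> \<le> real (card (nonadj_pairs E (?N p)))"
      using T_le unfolding c_def by (intro many_nonadj_pairs) (auto simp: neighbours_def)
    finally show ?thesis
      unfolding codegree_def c_def .
  qed
  then have "\<beta> * (T / 2) * rich_codegree_sum \<le> (\<Sum>p\<in>rich_pairs. real (card (nonadj_pairs E (?N p))))"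
    by (simp add: sum_distrib_left sum_mono)
  also have "\<dots> \<le> (\<Sum>p\<in>nonadj_pairs E V. real (card (nonadj_pairs E (?N p))))"
    by (intro sum_mono2 rich_pairs_subset finite_nonadj_pairs finite_V) simp
  also have "\<dots> \<le> 256 * real (num_induced_C4 V E)"
    using of_nat_mono[where 'a = real, OF sum_nonadj_common_neighbours_le_num_induced_C4[OF graph]]
    by simp
  finally show ?thesis .
qed

lemma rich_codegree_sum_ge:
  assumes "0 < \<alpha>" and "\<alpha> < 1/2" and "\<beta> \<le> 1"
    and T_eq: "T = 0.1 * \<alpha> ^ 2 * real (card V)"
    and dense: "\<alpha> * real (card V) ^ 2 \<le> real (e_count E V)"
  shows "\<beta> * (\<alpha> ^ 2 * real (card V) ^ 3) / 3 \<le> rich_codegree_sum"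
proof -
  define n where "n = real (card V)"
  define K where "K = \<alpha> ^ 2 * n ^ 3"
  have "\<alpha> * (\<alpha> * n) \<le> 1/2 * (\<alpha> * n)"
    using assms(1,2) unfolding n_def by (intro mult_right_mono) auto
  moreover have "20 \<le> \<alpha> * (\<alpha> * n)"
    using T_eq T_ge_2 unfolding n_def by (simp add: power2_eq_square)
  ultimately have "40 \<le> \<alpha> * n"
    by linarith
  then have "4 * \<alpha> * n ^ 2 * 40 \<le> 4 * \<alpha> * n ^ 2 * (\<alpha> * n)"
    using assms(1) by (intro mult_left_mono) auto
  moreover have "\<alpha> ^ 2 \<le> 1/4"
    using power_mono[of \<alpha> "1/2" 2] assms(1,2) by (simp add: power_divide)
  then have "\<alpha> ^ 2 * K \<le> 1/4 * K"
    unfolding K_def n_def by (intro mult_right_mono) auto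
  moreover have "n * (16 * T ^ 2) = 4/25 * (\<alpha> ^ 2 * K)" and "8 * n ^ 2 * T = 4/5 * K"
    and "4 * \<alpha> ^ 2 * n ^ 3 = 4 * K" and "4 * \<alpha> * n ^ 2 * (\<alpha> * n) = 4 * K"
    unfolding K_def T_eq n_def by (simp_all add: power2_eq_square power3_eq_cube algebra_simps)
  moreover have "rich_codegree_sum \<le> rich_codegree_sum / \<beta>"
    using beta_pos assms(3) by (simp add: le_divide_eq sum_nonneg mult_left_le)
  ultimately have "17/50 * K \<le> rich_codegree_sum / \<beta>"
    using sum_sq_degree_ge[OF graph _ dense] sum_sq_degree_le assms(1) unfolding n_def by linarith
  then have "17/50 * (\<beta> * K) \<le> rich_codegree_sum"
    using beta_pos by (simp add: field_simps)
  moreover have "0 \<le> \<beta> * K"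
    using beta_pos unfolding K_def n_def by simp
  ultimately show ?thesis
    unfolding K_def n_def by linarith
qed

lemma num_induced_C4_ge:
  assumes "0 < \<alpha>" and "\<alpha> < 1/2" and "\<beta> \<le> 1"
    and T_eq: "T = 0.1 * \<alpha> ^ 2 * real (card V)"
    and dense: "\<alpha> * real (card V) ^ 2 \<le> real (e_count E V)"
  shows "\<beta> ^ 2 * \<alpha> ^ 4 * real (card V) ^ 4 / 15360 \<le> real (num_induced_C4 V E)"
proof -
  have "\<beta> * (T / 2) * (\<beta> * (\<alpha> ^ 2 * real (card V) ^ 3) / 3) \<le> \<beta> * (T / 2) * rich_codegree_sum"
    using rich_codegree_sum_ge[OF assms] beta_pos T_ge_2 by (intro mult_left_mono) auto
  also have "\<dots> \<le> 256 * real (num_induced_C4 V E)"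
    by (rule rich_codegree_sum_le_num_induced_C4)
  finally show ?thesis
    unfolding T_eq by (simp add: eval_nat_numeral algebra_simps)
qed

end

lemma many_induced_C4_or_dense_subset:
  assumes graph: "simple_graph V E" and "0 < \<alpha>" and "\<alpha> < 1/2" and "0 < \<beta>" and "\<beta> < 1"
    and dense: "\<alpha> * real (card V) ^ 2 \<le> real (e_count E V)"
  shows "\<beta> ^ 2 * \<alpha> ^ 4 * real (card V) ^ 4 / 15360 \<le> real (num_induced_C4 V E) \<or>
    (\<exists>X. X \<subseteq> V \<and> card X \<ge> 2 \<and> real (card X) \<ge> 0.1 * \<alpha> ^ 2 * real (card V) \<and>
      density E X \<ge> 1 - \<beta>)"
    (is "_ \<or> (\<exists>X. ?dense X)")
proof (rule disjCI)
  assume no_dense: "\<not> (\<exists>X. ?dense X)"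
  define T where "T = 0.1 * \<alpha> ^ 2 * real (card V)"
  show "\<beta> ^ 2 * \<alpha> ^ 4 * real (card V) ^ 4 / 15360 \<le> real (num_induced_C4 V E)"
  proof (cases "card V = 0")
    case False
    then have "0 < \<alpha> * real (card V) ^ 2"
      using \<open>0 < \<alpha>\<close> by simp
    then have "0 < real (e_count E V)"
      using dense by linarith
    then obtain X where X: "X \<subseteq> V" "card X = 2" "density E X = 1"
      using exists_edge_with_density_one[OF graph] by auto
    have "2 \<le> T"
    proof (rule ccontr)
      assume "\<not> 2 \<le> T"
      then have "?dense X"
        using X \<open>0 < \<beta>\<close> unfolding T_def by simp
      then show False
        using no_dense by blast
    qed
    then interpret no_dense_subsets V E T \<beta>
      using graph no_dense \<open>0 < \<beta>\<close> by unfold_locales (auto simp: T_def)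
    show ?thesis
      by (rule num_induced_C4_ge) (use assms in \<open>simp_all add: T_def\<close>)
  qed simp
qed

theorem lemma3p3:
  "\<exists>c0::real. c0 > 0 \<and>
    (\<forall>(\<alpha>::real) (\<beta>::real) (V::nat set) (E::nat \<Rightarrow> nat \<Rightarrow> bool).
      0 < \<alpha> \<and> \<alpha> < 1/2 \<and> 0 < \<beta> \<and> \<beta> < 1 \<and> simple_graph V E \<and>
      real (e_count E V) \<ge> \<alpha> * real (card V) ^ 2 \<longrightarrow>
        real (num_induced_C4 V E) \<ge> c0 * \<alpha> ^ 80 * \<beta> ^ 20 * real (card V) ^ 4 \<or>
        (\<exists>X. X \<subseteq> V \<and> card X \<ge> 2 \<and> real (card X) \<ge> 0.1 * \<alpha> ^ 2 * real (card V) \<and>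
             density E X \<ge> 1 - \<beta>))"
proof (intro exI[of _ "1/15360"] conjI allI impI)
  fix \<alpha> \<beta> :: real and V :: "nat set" and E :: "nat \<Rightarrow> nat \<Rightarrow> bool"
  assume H: "0 < \<alpha> \<and> \<alpha> < 1/2 \<and> 0 < \<beta> \<and> \<beta> < 1 \<and> simple_graph V E \<and>
    real (e_count E V) \<ge> \<alpha> * real (card V) ^ 2"
  have "\<alpha> ^ 80 \<le> \<alpha> ^ 4" and "\<beta> ^ 20 \<le> \<beta> ^ 2"
    using H by (auto intro: power_decreasing)
  then have "\<alpha> ^ 80 * \<beta> ^ 20 * real (card V) ^ 4 \<le> \<beta> ^ 2 * \<alpha> ^ 4 * real (card V) ^ 4"
    using H by (intro mult_right_mono) (auto simp: mult.commute intro: mult_mono)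
  moreover have "\<beta> ^ 2 * \<alpha> ^ 4 * real (card V) ^ 4 / 15360 \<le> real (num_induced_C4 V E) \<or>
      (\<exists>X. X \<subseteq> V \<and> card X \<ge> 2 \<and> real (card X) \<ge> 0.1 * \<alpha> ^ 2 * real (card V) \<and>
        density E X \<ge> 1 - \<beta>)"
    using H by (intro many_induced_C4_or_dense_subset) auto
  ultimately show "real (num_induced_C4 V E) \<ge> 1/15360 * \<alpha> ^ 80 * \<beta> ^ 20 * real (card V) ^ 4 \<or>
      (\<exists>X. X \<subseteq> V \<and> card X \<ge> 2 \<and> real (card X) \<ge> 0.1 * \<alpha> ^ 2 * real (card V) \<and>
        density E X \<ge> 1 - \<beta>)"
    by fastforce
qed simp

end
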